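(* Let $\mathcal{C}$ be a monoidal C*-category and let $\perp$ be a symmetric binary relation on the set of objects of $\mathcal{C}$ such that: (1) if $\rho_1\perp\rho_2$ then $\rho_1\rho_2=\rho_2\rho_1$; (2) if $t_j:\sigma_j\to\tau_j$ ($j=1,2$) with $\sigma_1\perp\sigma_2$ and $\tau_1\perp\tau_2$, then $t_1\otimes t_2=t_2\otimes t_1$; (3) there exist two full monoidal C*-subcategories $\mathcal{C}_1,\mathcal{C}_2\subset\mathcal{C}$, each equivalent to $\mathcal{C}$, with $\rho_1\perp\rho_2$ for all objects $\rho_1\in\mathcal{C}_1$, $\rho_2\in\mathcal{C}_2$. Then $\mathcal{C}$ possesses a unique symmetry $\epsilon$ satisfying $\epsilon(\rho_1,\rho_2)=\mathbf{1}_{\rho_1\rho_2}$ whenever $\rho_1\perp\rho_2$.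
   Context: A monoidal C*-category: a C*-category (complex Banach morphism spaces $I(\sigma,\tau)$, bilinear composition with $\|s\circ t\|\le\|s\|\|t\|$, antilinear involution $*$ with $(s\circ t)^*=t^*\circ s^*$ and $\|t^*t\|=\|t\|^2$) with associative products $\sigma\tau$ on objects and $\otimes$ on morphisms, $t_1\otimes t_2:\sigma_1\sigma_2\to\tau_1\tau_2$, $\mathbf{1}_{\rho_1}\otimes\mathbf{1}_{\rho_2}=\mathbf{1}_{\rho_1\rho_2}$, $(s_1\circ t_1)\otimes(s_2\circ t_2)=(s_1\otimes s_2)\circ(t_1\otimes t_2)$, a unit object $\iota$ neutral for the object product with $\mathbf{1}_\iota$ neutral for $\otimes$, $\otimes$ bilinear and $(t_1\otimes t_2)^*=t_1^*\otimes t_2^*$. A full monoidal C*-subcategory is a full subcategory containing $\iota$ and closed under the object product; it is equivalent to $\mathcal{C}$ if every object of $\mathcal{C}$ is unitarily equivalent (isomorphic via a unitary morphism) to an object of the subcategory. A symmetry is a family of unitaries $\epsilon(\sigma,\tau):\sigma\tau\to\tau\sigma$ with $\epsilon(\sigma,\tau)^*=\epsilon(\tau,\sigma)$, $\epsilon(\iota,\rho)=\epsilon(\rho,\iota)=\mathbf{1}_\rho$, $\epsilon(\sigma\rho,\tau)=(\epsilon(\sigma,\tau)\otimes\mathbf{1}_\rho)\circ(\mathbf{1}_\sigma\otimes\epsilon(\rho,\tau))$, and $\epsilon(\tau_1,\tau_2)\circ(t_1\otimes t_2)=(t_2\otimes t_1)\circ\epsilon(\sigma_1,\sigma_2)$ for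 all $t_j:\sigma_j\to\tau_j$. *)

theory Defs
  imports Complex_Main
begin

text \<open>All morphism spaces I(sigma,tau) are
  realised as closed complex subspaces Hom sigma tau of one ambient complex Banach
  space (real Banach space 'm together with a complex scalar multiplication scC).\<close>

record ('o, 'm) mcstar =
  Hom   :: "'o \<Rightarrow> 'o \<Rightarrow> 'm set"
  cmp   :: "'m \<Rightarrow> 'm \<Rightarrow> 'm"
  idm   :: "'o \<Rightarrow> 'm"
  adj   :: "'m \<Rightarrow> 'm"
  tns   :: "'m \<Rightarrow> 'm \<Rightarrow> 'm"
  oprod :: "'o \<Rightarrow> 'o \<Rightarrow> 'o"
  ounit :: "'o"
  scC   :: "complex \<Rightarrow> 'm \<Rightarrow> 'm"

definition complex_scaling :: "(complex \<Rightarrow> 'm::banach \<Rightarrow> 'm) \<Rightarrow> bool" where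
  "complex_scaling sc \<longleftrightarrow>
     (\<forall>r x. sc (complex_of_real r) x = r *\<^sub>R x) \<and>
     (\<forall>a b x. sc (a + b) x = sc a x + sc b x) \<and>
     (\<forall>a x y. sc a (x + y) = sc a x + sc a y) \<and>
     (\<forall>a b x. sc (a * b) x = sc a (sc b x)) \<and>
     (\<forall>a x. norm (sc a x) = cmod a * norm x)"

definition closed_csubspace :: "(complex \<Rightarrow> 'm::banach \<Rightarrow> 'm) \<Rightarrow> 'm set \<Rightarrow> bool" where
  "closed_csubspace sc V \<longleftrightarrow> 0 \<in> V \<and> (\<forall>x\<in>V. \<forall>y\<in>V. x + y \<in> V) \<and>
     (\<forall>c. \<forall>x\<in>V. sc c x \<in> V) \<and> closed V"

definition cstar_category :: "('o, 'm::banach) mcstar \<Rightarrow> bool" where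
  "cstar_category C \<longleftrightarrow>
     complex_scaling (scC C) \<and>
     (\<forall>\<sigma> \<tau>. closed_csubspace (scC C) (Hom C \<sigma> \<tau>)) \<and>
     \<comment> \<open>composition\<close>
     (\<forall>\<sigma> \<tau> \<rho>. \<forall>s\<in>Hom C \<tau> \<rho>. \<forall>t\<in>Hom C \<sigma> \<tau>. cmp C s t \<in> Hom C \<sigma> \<rho>) \<and>
     (\<forall>\<sigma> \<tau> \<rho> \<pi>. \<forall>r\<in>Hom C \<rho> \<pi>. \<forall>s\<in>Hom C \<tau> \<rho>. \<forall>t\<in>Hom C \<sigma> \<tau>.
        cmp C r (cmp C s t) = cmp C (cmp C r s) t) \<and>
     (\<forall>\<sigma>. idm C \<sigma> \<in> Hom C \<sigma> \<sigma>) \<and>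
     (\<forall>\<sigma> \<tau>. \<forall>t\<in>Hom C \<sigma> \<tau>. cmp C (idm C \<tau>) t = t \<and> cmp C t (idm C \<sigma>) = t) \<and>
     (\<forall>\<sigma> \<tau> \<rho>. \<forall>s\<in>Hom C \<tau> \<rho>. \<forall>s'\<in>Hom C \<tau> \<rho>. \<forall>t\<in>Hom C \<sigma> \<tau>. \<forall>t'\<in>Hom C \<sigma> \<tau>. \<forall>c.
        cmp C (s + s') t = cmp C s t + cmp C s' t \<and>
        cmp C s (t + t') = cmp C s t + cmp C s t' \<and>
        cmp C (scC C c s) t = scC C c (cmp C s t) \<and>
        cmp C s (scC C c t) = scC C c (cmp C s t)) \<and>
     (\<forall>\<sigma> \<tau> \<rho>. \<forall>s\<in>Hom C \<tau> \<rho>. \<forall>t\<in>Hom C \<sigma> \<tau>. norm (cmp C s t) \<le> norm s * norm t) \<and>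
     \<comment> \<open>involution\<close>
     (\<forall>\<sigma> \<tau>. \<forall>t\<in>Hom C \<sigma> \<tau>. adj C t \<in> Hom C \<tau> \<sigma> \<and> adj C (adj C t) = t \<and>
        norm (cmp C (adj C t) t) = (norm t)\<^sup>2) \<and>
     (\<forall>\<sigma> \<tau>. \<forall>s\<in>Hom C \<sigma> \<tau>. \<forall>t\<in>Hom C \<sigma> \<tau>. \<forall>c.
        adj C (s + t) = adj C s + adj C t \<and> adj C (scC C c t) = scC C (cnj c) (adj C t)) \<and>
     (\<forall>\<sigma> \<tau> \<rho>. \<forall>s\<in>Hom C \<tau> \<rho>. \<forall>t\<in>Hom C \<sigma> \<tau>.
        adj C (cmp C s t) = cmp C (adj C t) (adj C s))"

definition monoidal_cstar_category :: "('o, 'm::banach) mcstar \<Rightarrow> bool" where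
  "monoidal_cstar_category C \<longleftrightarrow>
     cstar_category C \<and>
     (\<forall>a b c. oprod C (oprod C a b) c = oprod C a (oprod C b c)) \<and>
     (\<forall>a. oprod C (ounit C) a = a \<and> oprod C a (ounit C) = a) \<and>
     (\<forall>\<sigma>1 \<tau>1 \<sigma>2 \<tau>2. \<forall>t1\<in>Hom C \<sigma>1 \<tau>1. \<forall>t2\<in>Hom C \<sigma>2 \<tau>2.
        tns C t1 t2 \<in> Hom C (oprod C \<sigma>1 \<sigma>2) (oprod C \<tau>1 \<tau>2) \<and>
        adj C (tns C t1 t2) = tns C (adj C t1) (adj C t2)) \<and>
     (\<forall>\<sigma>1 \<tau>1 \<sigma>2 \<tau>2 \<sigma>3 \<tau>3. \<forall>t1\<in>Hom C \<sigma>1 \<tau>1. \<forall>t2\<in>Hom C \<sigma>2 \<tau>2. \<forall>t3\<in>Hom C \<sigma>3 \<tau>3.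
        tns C (tns C t1 t2) t3 = tns C t1 (tns C t2 t3)) \<and>
     (\<forall>a b. tns C (idm C a) (idm C b) = idm C (oprod C a b)) \<and>
     (\<forall>\<sigma> \<tau>. \<forall>t\<in>Hom C \<sigma> \<tau>. tns C (idm C (ounit C)) t = t \<and> tns C t (idm C (ounit C)) = t) \<and>
     (\<forall>\<sigma>1 \<tau>1 \<rho>1 \<sigma>2 \<tau>2 \<rho>2. \<forall>s1\<in>Hom C \<tau>1 \<rho>1. \<forall>t1\<in>Hom C \<sigma>1 \<tau>1.
        \<forall>s2\<in>Hom C \<tau>2 \<rho>2. \<forall>t2\<in>Hom C \<sigma>2 \<tau>2.
        tns C (cmp C s1 t1) (cmp C s2 t2) = cmp C (tns C s1 s2) (tns C t1 t2)) \<and>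
     (\<forall>\<sigma>1 \<tau>1 \<sigma>2 \<tau>2. \<forall>s\<in>Hom C \<sigma>1 \<tau>1. \<forall>s'\<in>Hom C \<sigma>1 \<tau>1.
        \<forall>t\<in>Hom C \<sigma>2 \<tau>2. \<forall>t'\<in>Hom C \<sigma>2 \<tau>2. \<forall>c.
        tns C (s + s') t = tns C s t + tns C s' t \<and>
        tns C s (t + t') = tns C s t + tns C s t' \<and>
        tns C (scC C c s) t = scC C c (tns C s t) \<and>
        tns C s (scC C c t) = scC C c (tns C s t))"

definition unitary :: "('o, 'm::banach) mcstar \<Rightarrow> 'o \<Rightarrow> 'o \<Rightarrow> 'm \<Rightarrow> bool" where
  "unitary C \<sigma> \<tau> u \<longleftrightarrow> u \<in> Hom C \<sigma> \<tau> \<and>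
     cmp C (adj C u) u = idm C \<sigma> \<and> cmp C u (adj C u) = idm C \<tau>"

text \<open>A full monoidal C*-subcategory is determined by its set of objects.\<close>
definition full_monoidal_subcat :: "('o, 'm::banach) mcstar \<Rightarrow> 'o set \<Rightarrow> bool" where
  "full_monoidal_subcat C S \<longleftrightarrow> ounit C \<in> S \<and> (\<forall>a\<in>S. \<forall>b\<in>S. oprod C a b \<in> S)"

definition equivalent_subcat :: "('o, 'm::banach) mcstar \<Rightarrow> 'o set \<Rightarrow> bool" where
  "equivalent_subcat C S \<longleftrightarrow> (\<forall>\<rho>. \<exists>\<rho>'\<in>S. \<exists>u. unitary C \<rho> \<rho>' u)"

definition symmetry :: "('o, 'm::banach) mcstar \<Rightarrow> ('o \<Rightarrow> 'o \<Rightarrow> 'm) \<Rightarrow> bool" where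
  "symmetry C \<epsilon> \<longleftrightarrow>
     (\<forall>\<sigma> \<tau>. unitary C (oprod C \<sigma> \<tau>) (oprod C \<tau> \<sigma>) (\<epsilon> \<sigma> \<tau>)) \<and>
     (\<forall>\<sigma> \<tau>. adj C (\<epsilon> \<sigma> \<tau>) = \<epsilon> \<tau> \<sigma>) \<and>
     (\<forall>\<rho>. \<epsilon> (ounit C) \<rho> = idm C \<rho> \<and> \<epsilon> \<rho> (ounit C) = idm C \<rho>) \<and>
     (\<forall>\<sigma> \<rho> \<tau>. \<epsilon> (oprod C \<sigma> \<rho>) \<tau> =
        cmp C (tns C (\<epsilon> \<sigma> \<tau>) (idm C \<rho>)) (tns C (idm C \<sigma>) (\<epsilon> \<rho> \<tau>))) \<and>
     (\<forall>\<sigma>1 \<tau>1 \<sigma>2 \<tau>2. \<forall>t1\<in>Hom C \<sigma>1 \<tau>1. \<forall>t2\<in>Hom C \<sigma>2 \<tau>2.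
        cmp C (\<epsilon> \<tau>1 \<tau>2) (tns C t1 t2) = cmp C (tns C t2 t1) (\<epsilon> \<sigma>1 \<sigma>2))"

end

theory Submission
  imports Defs
begin

text \<open>Choose for every object \<sigma> unitaries u1 \<sigma> : \<sigma> \<rightarrow> rep1 \<sigma> into S1 and
  u2 \<sigma> : \<sigma> \<rightarrow> rep2 \<sigma> into S2. Since rep1 \<sigma> \<perp> rep2 \<tau>, naturality forces every
  symmetry that is trivial on orthogonal pairs to be
  \<epsilon>(\<sigma>,\<tau>) = adj (u2 \<tau> \<otimes> u1 \<sigma>) \<circ> (u1 \<sigma> \<otimes> u2 \<tau>), which gives uniqueness.
  Conversely this formula is natural because morphisms between objects of S1 commute under
  \<otimes> with morphisms between objects of S2, and the remaining axioms of a symmetry follow by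
  evaluating the same formula with other unitaries into orthogonal objects: identities of
  \<iota>, products u1 \<sigma> \<otimes> u1 \<rho> into S1, or the roles of S1 and S2 exchanged.\<close>

definition natural_exchange :: "('o, 'm::banach) mcstar \<Rightarrow> ('o \<Rightarrow> 'o \<Rightarrow> 'm) \<Rightarrow> bool" where
  "natural_exchange C E \<longleftrightarrow>
     (\<forall>\<sigma> \<tau>. E \<sigma> \<tau> \<in> Hom C (oprod C \<sigma> \<tau>) (oprod C \<tau> \<sigma>)) \<and>
     (\<forall>\<sigma>1 \<tau>1 \<sigma>2 \<tau>2. \<forall>t1\<in>Hom C \<sigma>1 \<tau>1. \<forall>t2\<in>Hom C \<sigma>2 \<tau>2.
        cmp C (E \<tau>1 \<tau>2) (tns C t1 t2) = cmp C (tns C t2 t1) (E \<sigma>1 \<sigma>2))"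

lemma symmetry_natural_exchange: "symmetry C E \<Longrightarrow> natural_exchange C E"
  unfolding symmetry_def natural_exchange_def unitary_def by blast

locale monoidal_cstar =
  fixes C :: "('o, 'm::banach) mcstar"
  assumes monoidal: "monoidal_cstar_category C"
begin

lemma cstar: "cstar_category C"
  using monoidal by (simp add: monoidal_cstar_category_def)

lemma cmp_closed: "s \<in> Hom C \<tau> \<rho> \<Longrightarrow> t \<in> Hom C \<sigma> \<tau> \<Longrightarrow> cmp C s t \<in> Hom C \<sigma> \<rho>"
  using cstar unfolding cstar_category_def by simp

lemma cmp_assoc:
  "r \<in> Hom C \<rho> \<pi> \<Longrightarrow> s \<in> Hom C \<tau> \<rho> \<Longrightarrow> t \<in> Hom C \<sigma> \<tau> \<Longrightarrow>
   cmp C r (cmp C s t) = cmp C (cmp C r s) t"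
  using cstar unfolding cstar_category_def by simp

lemma idm_closed: "idm C \<sigma> \<in> Hom C \<sigma> \<sigma>"
  using cstar unfolding cstar_category_def by simp

lemma cmp_idm_left: "t \<in> Hom C \<sigma> \<tau> \<Longrightarrow> cmp C (idm C \<tau>) t = t"
  using cstar unfolding cstar_category_def by simp

lemma cmp_idm_right: "t \<in> Hom C \<sigma> \<tau> \<Longrightarrow> cmp C t (idm C \<sigma>) = t"
  using cstar unfolding cstar_category_def by simp

lemma adj_closed: "t \<in> Hom C \<sigma> \<tau> \<Longrightarrow> adj C t \<in> Hom C \<tau> \<sigma>"
  using cstar unfolding cstar_category_def by simp

lemma adj_adj: "t \<in> Hom C \<sigma> \<tau> \<Longrightarrow> adj C (adj C t) = t"
  using cstar unfolding cstar_category_def by simp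

lemma adj_cmp:
  "s \<in> Hom C \<tau> \<rho> \<Longrightarrow> t \<in> Hom C \<sigma> \<tau> \<Longrightarrow> adj C (cmp C s t) = cmp C (adj C t) (adj C s)"
  using cstar unfolding cstar_category_def by simp

lemma oprod_assoc: "oprod C (oprod C a b) c = oprod C a (oprod C b c)"
  using monoidal unfolding monoidal_cstar_category_def by simp

lemma tns_closed:
  "t1 \<in> Hom C \<sigma>1 \<tau>1 \<Longrightarrow> t2 \<in> Hom C \<sigma>2 \<tau>2 \<Longrightarrow>
   tns C t1 t2 \<in> Hom C (oprod C \<sigma>1 \<sigma>2) (oprod C \<tau>1 \<tau>2)"
  using monoidal unfolding monoidal_cstar_category_def by simp

lemma adj_tns:
  "t1 \<in> Hom C \<sigma>1 \<tau>1 \<Longrightarrow> t2 \<in> Hom C \<sigma>2 \<tau>2 \<Longrightarrow>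
   adj C (tns C t1 t2) = tns C (adj C t1) (adj C t2)"
  using monoidal unfolding monoidal_cstar_category_def by simp

lemma tns_assoc:
  "t1 \<in> Hom C \<sigma>1 \<tau>1 \<Longrightarrow> t2 \<in> Hom C \<sigma>2 \<tau>2 \<Longrightarrow> t3 \<in> Hom C \<sigma>3 \<tau>3 \<Longrightarrow>
   tns C (tns C t1 t2) t3 = tns C t1 (tns C t2 t3)"
  using monoidal unfolding monoidal_cstar_category_def by simp

lemma tns_idm: "tns C (idm C a) (idm C b) = idm C (oprod C a b)"
  using monoidal unfolding monoidal_cstar_category_def by simp

lemma tns_unit_left: "t \<in> Hom C \<sigma> \<tau> \<Longrightarrow> tns C (idm C (ounit C)) t = t"
  using monoidal unfolding monoidal_cstar_category_def by simp

lemma tns_unit_right: "t \<in> Hom C \<sigma> \<tau> \<Longrightarrow> tns C t (idm C (ounit C)) = t"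
  using monoidal unfolding monoidal_cstar_category_def by simp

lemma tns_cmp:
  "s1 \<in> Hom C \<tau>1 \<rho>1 \<Longrightarrow> t1 \<in> Hom C \<sigma>1 \<tau>1 \<Longrightarrow>
   s2 \<in> Hom C \<tau>2 \<rho>2 \<Longrightarrow> t2 \<in> Hom C \<sigma>2 \<tau>2 \<Longrightarrow>
   tns C (cmp C s1 t1) (cmp C s2 t2) = cmp C (tns C s1 s2) (tns C t1 t2)"
  using monoidal unfolding monoidal_cstar_category_def by simp


lemma adj_idm: "adj C (idm C a) = idm C a"
proof -
  have adj_hom: "adj C (idm C a) \<in> Hom C a a"
    by (rule adj_closed[OF idm_closed])
  have "idm C a = adj C (cmp C (adj C (idm C a)) (idm C a))"
    using adj_adj[OF idm_closed] cmp_idm_right[OF adj_hom] by simp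
  also have "\<dots> = cmp C (adj C (idm C a)) (idm C a)"
    using adj_cmp[OF adj_hom idm_closed] adj_adj[OF idm_closed] by simp
  also have "\<dots> = adj C (idm C a)"
    by (rule cmp_idm_right[OF adj_hom])
  finally show ?thesis by simp
qed

lemma unitary_closed: "unitary C a b u \<Longrightarrow> u \<in> Hom C a b"
  by (simp add: unitary_def)

lemma unitary_idm: "unitary C a a (idm C a)"
  unfolding unitary_def using adj_idm idm_closed cmp_idm_left by metis

lemma unitary_adj: "unitary C a b u \<Longrightarrow> unitary C b a (adj C u)"
  unfolding unitary_def using adj_closed adj_adj by metis

lemma unitary_cancel_left:
  assumes w: "unitary C a b w" and x: "x \<in> Hom C c a"
  shows "cmp C (adj C w) (cmp C w x) = x"
proof -
  have w_hom: "w \<in> Hom C a b"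
    using w by (rule unitary_closed)
  have "cmp C (adj C w) (cmp C w x) = cmp C (cmp C (adj C w) w) x"
    by (rule cmp_assoc[OF adj_closed[OF w_hom] w_hom x])
  also have "\<dots> = x"
    using w cmp_idm_left[OF x] unfolding unitary_def by simp
  finally show ?thesis .
qed

lemma unitary_cancel_right:
  assumes w: "unitary C a b w" and s: "s \<in> Hom C a c"
  shows "cmp C (cmp C s (adj C w)) w = s"
proof -
  have w_hom: "w \<in> Hom C a b"
    using w by (rule unitary_closed)
  have "cmp C (cmp C s (adj C w)) w = cmp C s (cmp C (adj C w) w)"
    by (rule cmp_assoc[OF s adj_closed[OF w_hom] w_hom, symmetric])
  also have "\<dots> = s"
    using w cmp_idm_right[OF s] unfolding unitary_def by simp
  finally show ?thesis .
qed

lemma unitary_cmp_inj: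
  assumes "unitary C a b w" and "x \<in> Hom C c a" and "y \<in> Hom C c a"
    and "cmp C w x = cmp C w y"
  shows "x = y"
proof -
  have "x = cmp C (adj C w) (cmp C w x)"
    using unitary_cancel_left[OF assms(1,2)] by (rule sym)
  also have "\<dots> = y"
    unfolding assms(4) by (rule unitary_cancel_left[OF assms(1,3)])
  finally show ?thesis .
qed

lemma unitary_cmp:
  assumes v: "unitary C a b v" and w: "unitary C b c w"
  shows "unitary C a c (cmp C w v)"
proof -
  have v_hom: "v \<in> Hom C a b" and w_hom: "w \<in> Hom C b c"
    using v w by (simp_all add: unitary_closed)
  have adj_wv: "adj C (cmp C w v) = cmp C (adj C v) (adj C w)"
    by (rule adj_cmp[OF w_hom v_hom])
  have "cmp C (cmp C (adj C v) (adj C w)) (cmp C w v) = cmp C (adj C v) (cmp C (adj C w) (cmp C w v))"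
    using cmp_assoc[OF adj_closed[OF v_hom] adj_closed[OF w_hom] cmp_closed[OF w_hom v_hom]] by simp
  also have "\<dots> = idm C a"
    using unitary_cancel_left[OF w v_hom] v unfolding unitary_def by simp
  finally have left: "cmp C (adj C (cmp C w v)) (cmp C w v) = idm C a"
    using adj_wv by simp
  have "cmp C (cmp C w v) (cmp C (adj C v) (adj C w)) = cmp C (cmp C (cmp C w v) (adj C v)) (adj C w)"
    using cmp_assoc[OF cmp_closed[OF w_hom v_hom] adj_closed[OF v_hom] adj_closed[OF w_hom]] .
  also have "\<dots> = idm C c"
    using unitary_cancel_right[OF unitary_adj[OF v] w_hom] adj_adj[OF v_hom] w
    unfolding unitary_def by simp
  finally have right: "cmp C (cmp C w v) (adj C (cmp C w v)) = idm C c"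
    using adj_wv by simp
  show ?thesis
    using left right cmp_closed[OF w_hom v_hom] unfolding unitary_def by simp
qed

lemma unitary_tns:
  assumes u: "unitary C a b u" and v: "unitary C c d v"
  shows "unitary C (oprod C a c) (oprod C b d) (tns C u v)"
proof -
  have u_hom: "u \<in> Hom C a b" and v_hom: "v \<in> Hom C c d"
    using u v by (simp_all add: unitary_closed)
  have "cmp C (tns C (adj C u) (adj C v)) (tns C u v) = idm C (oprod C a c)"
    using tns_cmp[OF adj_closed[OF u_hom] u_hom adj_closed[OF v_hom] v_hom] u v tns_idm
    unfolding unitary_def by simp
  moreover have "cmp C (tns C u v) (tns C (adj C u) (adj C v)) = idm C (oprod C b d)"
    using tns_cmp[OF u_hom adj_closed[OF u_hom] v_hom adj_closed[OF v_hom]] u v tns_idm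
    unfolding unitary_def by simp
  ultimately show ?thesis
    using adj_tns[OF u_hom v_hom] tns_closed[OF u_hom v_hom] unfolding unitary_def by simp
qed

lemma natural_exchange_at_identity:
  assumes E: "natural_exchange C E" and E_id: "E \<alpha> \<beta> = idm C (oprod C \<alpha> \<beta>)"
    and u: "u \<in> Hom C \<sigma> \<alpha>" and v: "v \<in> Hom C \<tau> \<beta>"
  shows "cmp C (tns C v u) (E \<sigma> \<tau>) = tns C u v"
proof -
  have "cmp C (tns C v u) (E \<sigma> \<tau>) = cmp C (E \<alpha> \<beta>) (tns C u v)"
    using E u v unfolding natural_exchange_def by simp
  also have "\<dots> = tns C u v"
    using E_id cmp_idm_left[OF tns_closed[OF u v]] by simp
  finally show ?thesis .
qed

lemma natural_exchange_unique:
  assumes "natural_exchange C E" "E \<alpha> \<beta> = idm C (oprod C \<alpha> \<beta>)"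
    and "natural_exchange C E'" "E' \<alpha> \<beta> = idm C (oprod C \<alpha> \<beta>)"
    and u: "unitary C \<sigma> \<alpha> u" and v: "unitary C \<tau> \<beta> v"
  shows "E \<sigma> \<tau> = E' \<sigma> \<tau>"
proof (rule unitary_cmp_inj[OF unitary_tns[OF v u]])
  show "E \<sigma> \<tau> \<in> Hom C (oprod C \<sigma> \<tau>) (oprod C \<tau> \<sigma>)"
    and "E' \<sigma> \<tau> \<in> Hom C (oprod C \<sigma> \<tau>) (oprod C \<tau> \<sigma>)"
    using assms(1,3) unfolding natural_exchange_def by simp_all
  show "cmp C (tns C v u) (E \<sigma> \<tau>) = cmp C (tns C v u) (E' \<sigma> \<tau>)"
    using natural_exchange_at_identity[OF assms(1,2) unitary_closed[OF u] unitary_closed[OF v]]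
      natural_exchange_at_identity[OF assms(3,4) unitary_closed[OF u] unitary_closed[OF v]] by simp
qed

end

locale perp_subcategories = monoidal_cstar C for C :: "('o, 'm::banach) mcstar" +
  fixes perp :: "'o \<Rightarrow> 'o \<Rightarrow> bool"
    and S1 S2 :: "'o set"
    and rep1 rep2 :: "'o \<Rightarrow> 'o"
    and u1 u2 :: "'o \<Rightarrow> 'm"
  assumes perp_sym: "perp a b \<Longrightarrow> perp b a"
    and perp_oprod_commute: "perp a b \<Longrightarrow> oprod C a b = oprod C b a"
    and perp_tns_commute: "t1 \<in> Hom C \<sigma>1 \<tau>1 \<Longrightarrow> t2 \<in> Hom C \<sigma>2 \<tau>2 \<Longrightarrow>
       perp \<sigma>1 \<sigma>2 \<Longrightarrow> perp \<tau>1 \<tau>2 \<Longrightarrow> tns C t1 t2 = tns C t2 t1"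
    and subcat1: "full_monoidal_subcat C S1"
    and subcat2: "full_monoidal_subcat C S2"
    and perp_subcats: "\<rho>1 \<in> S1 \<Longrightarrow> \<rho>2 \<in> S2 \<Longrightarrow> perp \<rho>1 \<rho>2"
    and rep1_in: "rep1 \<sigma> \<in> S1"
    and rep2_in: "rep2 \<sigma> \<in> S2"
    and unitary_u1: "unitary C \<sigma> (rep1 \<sigma>) (u1 \<sigma>)"
    and unitary_u2: "unitary C \<sigma> (rep2 \<sigma>) (u2 \<sigma>)"
begin

definition braiding :: "'o \<Rightarrow> 'o \<Rightarrow> 'm" where
  "braiding \<sigma> \<tau> = cmp C (adj C (tns C (u2 \<tau>) (u1 \<sigma>))) (tns C (u1 \<sigma>) (u2 \<tau>))"

lemma perp_reps: "perp (rep1 \<sigma>) (rep2 \<tau>)"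
  by (rule perp_subcats[OF rep1_in rep2_in])

lemma u1_closed: "u1 \<sigma> \<in> Hom C \<sigma> (rep1 \<sigma>)"
  by (rule unitary_closed[OF unitary_u1])

lemma u2_closed: "u2 \<sigma> \<in> Hom C \<sigma> (rep2 \<sigma>)"
  by (rule unitary_closed[OF unitary_u2])

lemma tns_u1_u2_closed:
  "tns C (u1 \<sigma>) (u2 \<tau>) \<in> Hom C (oprod C \<sigma> \<tau>) (oprod C (rep2 \<tau>) (rep1 \<sigma>))"
  using tns_closed[OF u1_closed u2_closed] perp_oprod_commute[OF perp_reps] by simp

lemma braiding_unitary: "unitary C (oprod C \<sigma> \<tau>) (oprod C \<tau> \<sigma>) (braiding \<sigma> \<tau>)"
proof -
  have "unitary C (oprod C \<sigma> \<tau>) (oprod C (rep2 \<tau>) (rep1 \<sigma>)) (tns C (u1 \<sigma>) (u2 \<tau>))"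
    using unitary_tns[OF unitary_u1 unitary_u2] perp_oprod_commute[OF perp_reps] by simp
  then show ?thesis
    unfolding braiding_def by (rule unitary_cmp[OF _ unitary_adj[OF unitary_tns[OF unitary_u2 unitary_u1]]])
qed

lemma braiding_closed: "braiding \<sigma> \<tau> \<in> Hom C (oprod C \<sigma> \<tau>) (oprod C \<tau> \<sigma>)"
  by (rule unitary_closed[OF braiding_unitary])

lemma tns_u2_u1_braiding: "cmp C (tns C (u2 \<tau>) (u1 \<sigma>)) (braiding \<sigma> \<tau>) = tns C (u1 \<sigma>) (u2 \<tau>)"
proof -
  have w: "unitary C (oprod C (rep2 \<tau>) (rep1 \<sigma>)) (oprod C \<tau> \<sigma>) (adj C (tns C (u2 \<tau>) (u1 \<sigma>)))"
    by (rule unitary_adj[OF unitary_tns[OF unitary_u2 unitary_u1]])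
  show ?thesis
    using unitary_cancel_left[OF w tns_u1_u2_closed] adj_adj[OF tns_closed[OF u2_closed u1_closed]]
    unfolding braiding_def by simp
qed

lemma braiding_perp:
  assumes "perp \<rho>1 \<rho>2"
  shows "braiding \<rho>1 \<rho>2 = idm C (oprod C \<rho>1 \<rho>2)"
proof -
  have "tns C (u1 \<rho>1) (u2 \<rho>2) = tns C (u2 \<rho>2) (u1 \<rho>1)"
    using perp_tns_commute[OF u1_closed u2_closed assms perp_reps] .
  then have "braiding \<rho>1 \<rho>2 = cmp C (tns C (adj C (u2 \<rho>2)) (adj C (u1 \<rho>1))) (tns C (u2 \<rho>2) (u1 \<rho>1))"
    unfolding braiding_def using adj_tns[OF u2_closed u1_closed] by simp
  also have "\<dots> = tns C (cmp C (adj C (u2 \<rho>2)) (u2 \<rho>2)) (cmp C (adj C (u1 \<rho>1)) (u1 \<rho>1))"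
    using tns_cmp[OF adj_closed[OF u2_closed] u2_closed adj_closed[OF u1_closed] u1_closed] by simp
  also have "\<dots> = idm C (oprod C \<rho>2 \<rho>1)"
    using unitary_u1 unitary_u2 tns_idm unfolding unitary_def by simp
  finally show ?thesis
    using perp_oprod_commute[OF assms] by simp
qed

lemma braiding_natural: "natural_exchange C braiding"
  unfolding natural_exchange_def
proof (intro conjI allI ballI braiding_closed)
  fix \<sigma> \<sigma>' \<tau> \<tau>' t1 t2
  assume t1: "t1 \<in> Hom C \<sigma> \<sigma>'" and t2: "t2 \<in> Hom C \<tau> \<tau>'"
  define a where "a = cmp C (cmp C (u1 \<sigma>') t1) (adj C (u1 \<sigma>))"
  define b where "b = cmp C (cmp C (u2 \<tau>') t2) (adj C (u2 \<tau>))"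
  have a_closed: "a \<in> Hom C (rep1 \<sigma>) (rep1 \<sigma>')" and b_closed: "b \<in> Hom C (rep2 \<tau>) (rep2 \<tau>')"
    unfolding a_def b_def
    by (rule cmp_closed[OF cmp_closed[OF u1_closed t1] adj_closed[OF u1_closed]],
        rule cmp_closed[OF cmp_closed[OF u2_closed t2] adj_closed[OF u2_closed]])
  have a_u1: "cmp C a (u1 \<sigma>) = cmp C (u1 \<sigma>') t1"
    unfolding a_def by (rule unitary_cancel_right[OF unitary_u1 cmp_closed[OF u1_closed t1]])
  have b_u2: "cmp C b (u2 \<tau>) = cmp C (u2 \<tau>') t2"
    unfolding b_def by (rule unitary_cancel_right[OF unitary_u2 cmp_closed[OF u2_closed t2]])
  \<comment> \<open>a and b are morphisms inside S1 and S2 respectively, hence commute under tns\<close>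
  have b_a: "tns C b a = tns C a b"
    using perp_tns_commute[OF b_closed a_closed perp_sym[OF perp_reps] perp_sym[OF perp_reps]] .
  have w: "unitary C (oprod C \<tau>' \<sigma>') (oprod C (rep2 \<tau>') (rep1 \<sigma>')) (tns C (u2 \<tau>') (u1 \<sigma>'))"
    by (rule unitary_tns[OF unitary_u2 unitary_u1])
  have "cmp C (tns C (u2 \<tau>') (u1 \<sigma>')) (cmp C (braiding \<sigma>' \<tau>') (tns C t1 t2))
      = cmp C (tns C (u1 \<sigma>') (u2 \<tau>')) (tns C t1 t2)"
    using cmp_assoc[OF unitary_closed[OF w] braiding_closed tns_closed[OF t1 t2]]
      tns_u2_u1_braiding by simp
  also have "\<dots> = tns C (cmp C a (u1 \<sigma>)) (cmp C b (u2 \<tau>))"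
    using tns_cmp[OF u1_closed t1 u2_closed t2] a_u1 b_u2 by simp
  also have "\<dots> = cmp C (tns C a b) (cmp C (tns C (u2 \<tau>) (u1 \<sigma>)) (braiding \<sigma> \<tau>))"
    using tns_cmp[OF a_closed u1_closed b_closed u2_closed] tns_u2_u1_braiding by simp
  also have "\<dots> = cmp C (tns C (cmp C b (u2 \<tau>)) (cmp C a (u1 \<sigma>))) (braiding \<sigma> \<tau>)"
    using cmp_assoc[OF tns_closed[OF b_closed a_closed] tns_closed[OF u2_closed u1_closed] braiding_closed]
      tns_cmp[OF b_closed u2_closed a_closed u1_closed] b_a by simp
  also have "\<dots> = cmp C (tns C (u2 \<tau>') (u1 \<sigma>')) (cmp C (tns C t2 t1) (braiding \<sigma> \<tau>))"
    using cmp_assoc[OF unitary_closed[OF w] tns_closed[OF t2 t1] braiding_closed]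
      tns_cmp[OF u2_closed t2 u1_closed t1] a_u1 b_u2 by simp
  finally show "cmp C (braiding \<sigma>' \<tau>') (tns C t1 t2) = cmp C (tns C t2 t1) (braiding \<sigma> \<tau>)"
    by (rule unitary_cmp_inj[OF w cmp_closed[OF braiding_closed tns_closed[OF t1 t2]]
          cmp_closed[OF tns_closed[OF t2 t1] braiding_closed]])
qed

lemma tns_braiding:
  assumes "u \<in> Hom C \<sigma> \<alpha>" and "v \<in> Hom C \<tau> \<beta>" and "perp \<alpha> \<beta>"
  shows "cmp C (tns C v u) (braiding \<sigma> \<tau>) = tns C u v"
  by (rule natural_exchange_at_identity[OF braiding_natural braiding_perp[OF assms(3)] assms(1,2)])

lemma braiding_eq_conjugate:
  assumes u: "unitary C \<sigma> \<alpha> u" and v: "unitary C \<tau> \<beta> v" and "perp \<alpha> \<beta>"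
  shows "braiding \<sigma> \<tau> = cmp C (adj C (tns C v u)) (tns C u v)"
  using unitary_cancel_left[OF unitary_tns[OF v u] braiding_closed]
    tns_braiding[OF unitary_closed[OF u] unitary_closed[OF v] assms(3)] by simp

lemma adj_braiding: "adj C (braiding \<sigma> \<tau>) = braiding \<tau> \<sigma>"
proof -
  have "adj C (braiding \<sigma> \<tau>) = cmp C (adj C (tns C (u1 \<sigma>) (u2 \<tau>))) (tns C (u2 \<tau>) (u1 \<sigma>))"
    unfolding braiding_def
    using adj_cmp[OF adj_closed[OF tns_closed[OF u2_closed u1_closed]] tns_u1_u2_closed]
      adj_adj[OF tns_closed[OF u2_closed u1_closed]] by simp
  also have "\<dots> = braiding \<tau> \<sigma>"
    using braiding_eq_conjugate[OF unitary_u2 unitary_u1] perp_sym perp_reps by simp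
  finally show ?thesis .
qed

lemma braiding_unit_left: "braiding (ounit C) \<rho> = idm C \<rho>"
proof -
  have "perp (ounit C) (rep2 \<rho>)"
    using perp_subcats subcat1 rep2_in unfolding full_monoidal_subcat_def by blast
  then have "braiding (ounit C) \<rho> = cmp C (adj C (u2 \<rho>)) (u2 \<rho>)"
    using braiding_eq_conjugate[OF unitary_idm unitary_u2]
      tns_unit_left[OF u2_closed] tns_unit_right[OF u2_closed] by simp
  then show ?thesis
    using unitary_u2 unfolding unitary_def by simp
qed

lemma braiding_unit_right: "braiding \<rho> (ounit C) = idm C \<rho>"
proof -
  have "perp (rep1 \<rho>) (ounit C)"
    using perp_subcats subcat2 rep1_in unfolding full_monoidal_subcat_def by blast
  then have "braiding \<rho> (ounit C) = cmp C (adj C (u1 \<rho>)) (u1 \<rho>)"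
    using braiding_eq_conjugate[OF unitary_u1 unitary_idm]
      tns_unit_left[OF u1_closed] tns_unit_right[OF u1_closed] by simp
  then show ?thesis
    using unitary_u1 unfolding unitary_def by simp
qed

lemma braiding_oprod_left:
  "braiding (oprod C \<sigma> \<rho>) \<tau> =
     cmp C (tns C (braiding \<sigma> \<tau>) (idm C \<rho>)) (tns C (idm C \<sigma>) (braiding \<rho> \<tau>))"
proof -
  let ?u = "tns C (u1 \<sigma>) (u1 \<rho>)"
  let ?rhs = "cmp C (tns C (braiding \<sigma> \<tau>) (idm C \<rho>)) (tns C (idm C \<sigma>) (braiding \<rho> \<tau>))"
  have u: "unitary C (oprod C \<sigma> \<rho>) (oprod C (rep1 \<sigma>) (rep1 \<rho>)) ?u"
    by (rule unitary_tns[OF unitary_u1 unitary_u1])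
  have w: "unitary C (oprod C \<tau> (oprod C \<sigma> \<rho>)) (oprod C (rep2 \<tau>) (oprod C (rep1 \<sigma>) (rep1 \<rho>)))
      (tns C (u2 \<tau>) ?u)"
    by (rule unitary_tns[OF unitary_u2 u])
  have left: "tns C (braiding \<sigma> \<tau>) (idm C \<rho>)
      \<in> Hom C (oprod C \<sigma> (oprod C \<tau> \<rho>)) (oprod C \<tau> (oprod C \<sigma> \<rho>))"
    using tns_closed[OF braiding_closed idm_closed] by (simp add: oprod_assoc)
  have right: "tns C (idm C \<sigma>) (braiding \<rho> \<tau>)
      \<in> Hom C (oprod C \<sigma> (oprod C \<rho> \<tau>)) (oprod C \<sigma> (oprod C \<tau> \<rho>))"
    by (rule tns_closed[OF idm_closed braiding_closed])
  have "cmp C (tns C (u2 \<tau>) ?u) ?rhs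
      = cmp C (cmp C (tns C (tns C (u2 \<tau>) (u1 \<sigma>)) (u1 \<rho>)) (tns C (braiding \<sigma> \<tau>) (idm C \<rho>)))
          (tns C (idm C \<sigma>) (braiding \<rho> \<tau>))"
    using cmp_assoc[OF unitary_closed[OF w] left right] tns_assoc[OF u2_closed u1_closed u1_closed] by simp
  also have "\<dots> = cmp C (tns C (u1 \<sigma>) (tns C (u2 \<tau>) (u1 \<rho>))) (tns C (idm C \<sigma>) (braiding \<rho> \<tau>))"
    using tns_cmp[OF tns_closed[OF u2_closed u1_closed] braiding_closed u1_closed idm_closed]
      tns_u2_u1_braiding cmp_idm_right[OF u1_closed] tns_assoc[OF u1_closed u2_closed u1_closed] by simp
  also have "\<dots> = tns C ?u (u2 \<tau>)"
    using tns_cmp[OF u1_closed idm_closed tns_closed[OF u2_closed u1_closed] braiding_closed]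
      tns_u2_u1_braiding cmp_idm_right[OF u1_closed] tns_assoc[OF u1_closed u1_closed u2_closed] by simp
  \<comment> \<open>S1 is closed under oprod, so ?u also lands in an object orthogonal to rep2 \<tau>\<close>
  also have "\<dots> = cmp C (tns C (u2 \<tau>) ?u) (braiding (oprod C \<sigma> \<rho>) \<tau>)"
    using tns_braiding[OF unitary_closed[OF u] u2_closed] perp_subcats subcat1 rep1_in rep2_in
    unfolding full_monoidal_subcat_def by simp
  moreover have "?rhs \<in> Hom C (oprod C (oprod C \<sigma> \<rho>) \<tau>) (oprod C \<tau> (oprod C \<sigma> \<rho>))"
    using cmp_closed[OF left right] by (simp add: oprod_assoc)
  ultimately show ?thesis
    using unitary_cmp_inj[OF w braiding_closed] by simp
qed

lemma braiding_symmetry: "symmetry C braiding"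
  unfolding symmetry_def
  using braiding_unitary adj_braiding braiding_unit_left braiding_unit_right braiding_oprod_left
    braiding_natural[unfolded natural_exchange_def] by simp

lemma natural_exchange_eq_braiding:
  assumes "natural_exchange C E"
    and "\<forall>\<rho>1 \<rho>2. perp \<rho>1 \<rho>2 \<longrightarrow> E \<rho>1 \<rho>2 = idm C (oprod C \<rho>1 \<rho>2)"
  shows "E = braiding"
proof (intro ext)
  fix \<sigma> \<tau>
  have "E (rep1 \<sigma>) (rep2 \<tau>) = idm C (oprod C (rep1 \<sigma>) (rep2 \<tau>))"
    using assms(2) perp_reps by blast
  then show "E \<sigma> \<tau> = braiding \<sigma> \<tau>"
    by (rule natural_exchange_unique[OF assms(1) _ braiding_natural braiding_perp[OF perp_reps]
          unitary_u1 unitary_u2])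
qed

end

lemma equivalent_subcat_choice:
  assumes "equivalent_subcat C S"
  obtains rep u where "\<And>\<sigma>. rep \<sigma> \<in> S" and "\<And>\<sigma>. unitary C \<sigma> (rep \<sigma>) (u \<sigma>)"
proof -
  have "\<forall>\<sigma>. \<exists>\<rho> v. \<rho> \<in> S \<and> unitary C \<sigma> \<rho> v"
    using assms unfolding equivalent_subcat_def by blast
  then obtain rep u where "\<forall>\<sigma>. rep \<sigma> \<in> S \<and> unitary C \<sigma> (rep \<sigma>) (u \<sigma>)"
    by metis
  then show ?thesis
    using that by blast
qed

theorem lemmaA2:
  fixes C :: "('o, 'm::banach) mcstar" and perp :: "'o \<Rightarrow> 'o \<Rightarrow> bool"
  assumes "monoidal_cstar_category C"
    and "\<forall>a b. perp a b \<longrightarrow> perp b a"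
    and "\<forall>a b. perp a b \<longrightarrow> oprod C a b = oprod C b a"
    and "\<forall>\<sigma>1 \<tau>1 \<sigma>2 \<tau>2. \<forall>t1\<in>Hom C \<sigma>1 \<tau>1. \<forall>t2\<in>Hom C \<sigma>2 \<tau>2.
           perp \<sigma>1 \<sigma>2 \<and> perp \<tau>1 \<tau>2 \<longrightarrow> tns C t1 t2 = tns C t2 t1"
    and "\<exists>S1 S2. full_monoidal_subcat C S1 \<and> equivalent_subcat C S1 \<and>
                full_monoidal_subcat C S2 \<and> equivalent_subcat C S2 \<and>
                (\<forall>\<rho>1\<in>S1. \<forall>\<rho>2\<in>S2. perp \<rho>1 \<rho>2)"
  shows "\<exists>!\<epsilon>. symmetry C \<epsilon> \<and>
           (\<forall>\<rho>1 \<rho>2. perp \<rho>1 \<rho>2 \<longrightarrow> \<epsilon> \<rho>1 \<rho>2 = idm C (oprod C \<rho>1 \<rho>2))"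
proof -
  obtain S1 S2 where S: "full_monoidal_subcat C S1" "equivalent_subcat C S1"
      "full_monoidal_subcat C S2" "equivalent_subcat C S2" "\<forall>\<rho>1\<in>S1. \<forall>\<rho>2\<in>S2. perp \<rho>1 \<rho>2"
    using assms(5) by blast
  obtain rep1 u1 where "\<And>\<sigma>. rep1 \<sigma> \<in> S1" "\<And>\<sigma>. unitary C \<sigma> (rep1 \<sigma>) (u1 \<sigma>)"
    using equivalent_subcat_choice[OF S(2)] by metis
  moreover obtain rep2 u2 where "\<And>\<sigma>. rep2 \<sigma> \<in> S2" "\<And>\<sigma>. unitary C \<sigma> (rep2 \<sigma>) (u2 \<sigma>)"
    using equivalent_subcat_choice[OF S(4)] by metis
  ultimately interpret perp_subcategories C perp S1 S2 rep1 rep2 u1 u2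
    by unfold_locales (use assms S in blast)+
  show ?thesis
  proof (rule ex1I[of _ braiding])
    show "symmetry C braiding \<and>
        (\<forall>\<rho>1 \<rho>2. perp \<rho>1 \<rho>2 \<longrightarrow> braiding \<rho>1 \<rho>2 = idm C (oprod C \<rho>1 \<rho>2))"
      using braiding_symmetry braiding_perp by blast
  next
    fix E
    assume "symmetry C E \<and>
        (\<forall>\<rho>1 \<rho>2. perp \<rho>1 \<rho>2 \<longrightarrow> E \<rho>1 \<rho>2 = idm C (oprod C \<rho>1 \<rho>2))"
    then show "E = braiding"
      using natural_exchange_eq_braiding symmetry_natural_exchange by blast
  qed
qed

end
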